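(* Let $\sigma>0$, $a>0$, $m\in\mathbb R$, and $u_0(x)=\sqrt{\frac{a}{2\pi}}e^{-\frac a2(x-m)^2}$. Then the solution $u$ of $$\partial_t u=\sigma^2\partial_{xx}u+\Big(x^2-\int_{\mathbb R}y^2u(t,y)\,dy\Big)u,\quad x\in\mathbb R,\qquad u(0,\cdot)=u_0,$$ remains Gaussian for $0<t<T:=\frac{\arctan(a\sigma)}{2\sigma}$ and is given by $$u(t,x)=\sqrt{\frac{a(t)}{2\pi}}e^{-\frac{a(t)}{2}(x-m(t))^2},\quad a(t):=\frac{a\sigma-\tan(2\sigma t)}{\sigma(1+a\sigma\tan(2\sigma t))},\quad m(t):=\frac{ma\sigma}{a\sigma\cos(2\sigma t)-\sin(2\sigma t)}.$$
   Context: The solution of the equation is understood to exist as long as the nonlocal term $\int_{\mathbb R}x^2u(t,x)\,dx$ is finite. *)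

theory Defs
  imports "HOL-Analysis.Analysis"
begin

definition gauss :: "real \<Rightarrow> real \<Rightarrow> real \<Rightarrow> real" where
  "gauss p c x = sqrt (p / (2 * pi)) * exp (- (p / 2) * (x - c)^2)"

definition prec_t :: "real \<Rightarrow> real \<Rightarrow> real \<Rightarrow> real" where
  "prec_t \<sigma> a t = (a * \<sigma> - tan (2 * \<sigma> * t)) / (\<sigma> * (1 + a * \<sigma> * tan (2 * \<sigma> * t)))"

definition mean_t :: "real \<Rightarrow> real \<Rightarrow> real \<Rightarrow> real \<Rightarrow> real" where
  "mean_t \<sigma> a m t = m * a * \<sigma> / (a * \<sigma> * cos (2 * \<sigma> * t) - sin (2 * \<sigma> * t))"

end

theory Submission
  imports Defs "HOL-Probability.Distributions"
begin

(* For a Gaussian u = gauss A M, the quotients u_t / u and u_xx / u are quadratic polynomials in x,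
   and the nonlocal term is x^2 - 1/A - M^2. Matching coefficients, gauss (A t) (M t) solves the
   equation exactly when A' = -2 (1 + \<sigma>^2 A^2) and M' = 2 M / A. With \<alpha> = arctan (a \<sigma>), the Riccati
   equation is solved by A t = tan (\<alpha> - 2 \<sigma> t) / \<sigma>, which is prec_t, and then
   M t = m sin \<alpha> / sin (\<alpha> - 2 \<sigma> t), which is mean_t. The precision stays positive until 2 \<sigma> t
   reaches \<alpha>, i.e. up to time T. *)

lemma gauss_eq_normal_density: "p > 0 \<Longrightarrow> gauss p c x = normal_density c (1 / sqrt p) x"
  unfolding gauss_def normal_density_def
  by (simp add: power_divide real_sqrt_divide field_simps)

lemma has_integral_power2_gauss:
  assumes "p > 0"
  shows "((\<lambda>x. x^2 * gauss p c x) has_integral (1 / p + c^2)) UNIV"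
proof -
  define s where "s = 1 / sqrt p"
  have s: "s > 0" "s^2 = 1 / p"
    using assms by (simp_all add: s_def power_divide)
  have "has_bochner_integral lborel
      (\<lambda>x. normal_density c s x * (x - c)^(2 * 1) + 2 * c * (normal_density c s x * x) - c^2 * normal_density c s x)
      (s^2 + 2 * c * c - c^2 * 1)"
    using normal_moment_even[OF \<open>s > 0\<close>, of c 1] normal_moment_nz_1[OF \<open>s > 0\<close>, of c]
      integral_normal_density[OF \<open>s > 0\<close>, of c]
      has_bochner_integral_integrable[OF integrable_normal_density[OF \<open>s > 0\<close>, of c]]
    by (intro has_bochner_integral_diff has_bochner_integral_add has_bochner_integral_mult_right) simp_all
  moreover have "normal_density c s x * (x - c)^(2 * 1) + 2 * c * (normal_density c s x * x)
      - c^2 * normal_density c s x = x^2 * gauss p c x" for x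
    using assms by (simp add: gauss_eq_normal_density s_def power2_eq_square algebra_simps)
  ultimately have "has_bochner_integral lborel (\<lambda>x. x^2 * gauss p c x) (1 / p + c^2)"
    using s by (simp add: power2_eq_square add.commute)
  then show ?thesis
    by (auto simp: has_bochner_integral_iff dest: has_integral_integral_lborel)
qed

lemma has_real_derivative_gauss: "(gauss p c has_real_derivative - p * (x - c) * gauss p c x) (at x)"
  unfolding gauss_def[abs_def]
  by (rule derivative_eq_intros refl)+ (simp add: algebra_simps)

lemma has_real_derivative_gauss_deriv:
  "((\<lambda>y. - p * (y - c) * gauss p c y) has_real_derivative (p^2 * (x - c)^2 - p) * gauss p c x) (at x)"
  by (rule derivative_eq_intros has_real_derivative_gauss refl)+ (simp add: algebra_simps power2_eq_square)

lemma gauss_eq_exp: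
  assumes "p > 0"
  shows "gauss p c x = exp (ln (p / (2 * pi)) / 2 - p / 2 * (x - c)^2)"
proof -
  have "sqrt (p / (2 * pi)) = exp (ln (p / (2 * pi)) / 2)"
    using assms powr_half_sqrt[of "p / (2 * pi)"] by (simp add: powr_def)
  then show ?thesis
    unfolding gauss_def exp_diff by (simp add: exp_minus field_simps)
qed

lemma has_real_derivative_gauss_time:
  assumes dA: "(A has_real_derivative A') (at t)" and dM: "(M has_real_derivative M') (at t)"
    and pos: "A t > 0"
  shows "((\<lambda>s. gauss (A s) (M s) x) has_real_derivative
     gauss (A t) (M t) x * (A' / (2 * A t) - A' / 2 * (x - M t)^2 + A t * M' * (x - M t))) (at t)"
proof -
  have "\<forall>\<^sub>F s in nhds t. A s > 0"
    using DERIV_isCont[OF dA] pos by (simp add: isCont_def tendsto_at_iff_tendsto_nhds order_tendstoD)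
  then have ev: "\<forall>\<^sub>F s in nhds t. gauss (A s) (M s) x = exp (ln (A s / (2 * pi)) / 2 - A s / 2 * (x - M s)^2)"
    by eventually_elim (rule gauss_eq_exp)
  have "((\<lambda>s. exp (ln (A s / (2 * pi)) / 2 - A s / 2 * (x - M s)^2)) has_real_derivative
     exp (ln (A t / (2 * pi)) / 2 - A t / 2 * (x - M t)^2) * (A' / (2 * A t) - A' / 2 * (x - M t)^2 + A t * M' * (x - M t))) (at t)"
    by (rule derivative_eq_intros refl dA dM | use pos in simp)+
  then show ?thesis
    using DERIV_cong_ev[OF refl ev refl] gauss_eq_exp[OF pos] by simp
qed

lemma has_real_derivative_gauss_riccati:
  assumes "(A has_real_derivative -2 * (1 + \<sigma>^2 * (A t)^2)) (at t)"
    and "(M has_real_derivative 2 * M t / A t) (at t)" and "A t > 0"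
  shows "((\<lambda>s. gauss (A s) (M s) x) has_real_derivative
     \<sigma>^2 * ((A t^2 * (x - M t)^2 - A t) * gauss (A t) (M t) x)
       + (x^2 - (1 / A t + M t^2)) * gauss (A t) (M t) x) (at t)"
  using has_real_derivative_gauss_time[OF assms]
  by (rule DERIV_cong) (use \<open>A t > 0\<close> in \<open>simp add: field_simps power2_eq_square\<close>)

lemma has_real_derivative_tan_scaled:
  assumes "cos (c * t) \<noteq> 0"
  shows "((\<lambda>s. tan (c * s)) has_real_derivative c * (1 + tan (c * t)^2)) (at t)"
proof -
  have "((\<lambda>s. tan (c * s)) has_real_derivative inverse ((cos (c * t))^2) * c) (at t)"
    by (rule DERIV_chain2[where f = tan and g = "\<lambda>s. c * s", OF DERIV_tan[OF assms]]) (auto intro!: derivative_eq_intros)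
  moreover have "inverse ((cos (c * t))^2) = 1 + (tan (c * t))^2"
    using assms sin_cos_squared_add[of "c * t"] by (simp add: tan_def field_simps)
  ultimately show ?thesis by (simp add: mult.commute)
qed

lemma has_real_derivative_prec_t:
  assumes "\<sigma> \<noteq> 0" and "cos (2 * \<sigma> * t) \<noteq> 0" and "1 + a * \<sigma> * tan (2 * \<sigma> * t) \<noteq> 0"
  shows "(prec_t \<sigma> a has_real_derivative -2 * (1 + \<sigma>^2 * (prec_t \<sigma> a t)^2)) (at t)"
proof -
  define \<tau> where "\<tau> = tan (2 * \<sigma> * t)"
  define \<tau>' where "\<tau>' = 2 * \<sigma> * (1 + \<tau>^2)"
  have d\<tau>: "((\<lambda>s. tan (2 * \<sigma> * s)) has_real_derivative \<tau>') (at t)"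
    unfolding \<tau>'_def \<tau>_def using has_real_derivative_tan_scaled[of "2 * \<sigma>"] assms(2) by simp
  have num: "((\<lambda>s. a * \<sigma> - tan (2 * \<sigma> * s)) has_real_derivative - \<tau>') (at t)"
    using DERIV_diff[OF DERIV_const d\<tau>] by simp
  have den: "((\<lambda>s. \<sigma> * (1 + a * \<sigma> * tan (2 * \<sigma> * s))) has_real_derivative \<sigma> * (a * \<sigma> * \<tau>')) (at t)"
    using DERIV_cmult[OF DERIV_add[OF DERIV_const DERIV_cmult[OF d\<tau>]]] by simp
  have "(prec_t \<sigma> a has_real_derivative
      (- \<tau>' * (\<sigma> * (1 + a * \<sigma> * \<tau>)) - (a * \<sigma> - \<tau>) * (\<sigma> * (a * \<sigma> * \<tau>')))
      / ((\<sigma> * (1 + a * \<sigma> * \<tau>)) * (\<sigma> * (1 + a * \<sigma> * \<tau>)))) (at t)"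
    (is "(_ has_real_derivative ?D) _")
    unfolding prec_t_def[abs_def] \<tau>_def
    by (rule DERIV_divide[OF num den]) (use assms in simp)
  moreover have "?D = -2 * (1 + \<sigma>^2 * (prec_t \<sigma> a t)^2)"
  proof -
    define K where "K = \<sigma> * (1 + a * \<sigma> * \<tau>)"
    have "K \<noteq> 0" using assms by (simp add: K_def \<tau>_def)
    then show ?thesis
      unfolding prec_t_def \<tau>_def[symmetric] K_def[symmetric] \<tau>'_def
      by (simp add: field_simps power2_eq_square) (simp add: K_def algebra_simps)
  qed
  ultimately show ?thesis by simp
qed

lemma has_real_derivative_mean_t:
  assumes "\<sigma> \<noteq> 0" and "cos (2 * \<sigma> * t) \<noteq> 0" and "1 + a * \<sigma> * tan (2 * \<sigma> * t) \<noteq> 0"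
    and "a * \<sigma> * cos (2 * \<sigma> * t) - sin (2 * \<sigma> * t) \<noteq> 0"
  shows "(mean_t \<sigma> a m has_real_derivative 2 * mean_t \<sigma> a m t / prec_t \<sigma> a t) (at t)"
proof -
  define c where "c = cos (2 * \<sigma> * t)"
  define s where "s = sin (2 * \<sigma> * t)"
  have D: "a * \<sigma> * c - s \<noteq> 0" and E: "c + a * \<sigma> * s \<noteq> 0" and "c \<noteq> 0"
    using assms by (auto simp: c_def s_def tan_def field_simps)
  have dD: "((\<lambda>r. a * \<sigma> * cos (2 * \<sigma> * r) - sin (2 * \<sigma> * r)) has_real_derivative
      - 2 * \<sigma> * (a * \<sigma> * s + c)) (at t)"
    unfolding c_def s_def by (rule derivative_eq_intros refl)+ (simp add: algebra_simps)
  have "(mean_t \<sigma> a m has_real_derivative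
      (0 * (a * \<sigma> * c - s) - m * a * \<sigma> * (- 2 * \<sigma> * (a * \<sigma> * s + c)))
      / ((a * \<sigma> * c - s) * (a * \<sigma> * c - s))) (at t)"
    (is "(_ has_real_derivative ?D) _")
    unfolding mean_t_def[abs_def] c_def s_def
    by (rule DERIV_divide[OF DERIV_const dD[unfolded c_def s_def]]) (use D in \<open>simp add: c_def s_def\<close>)
  moreover have "prec_t \<sigma> a t = (a * \<sigma> * c - s) / (\<sigma> * (c + a * \<sigma> * s))"
  proof -
    have "a * \<sigma> - s / c = (a * \<sigma> * c - s) / c" and "\<sigma> * (1 + a * \<sigma> * (s / c)) = \<sigma> * (c + a * \<sigma> * s) / c"
      using \<open>c \<noteq> 0\<close> by (simp_all add: field_simps)
    then show ?thesis
      unfolding prec_t_def tan_def c_def[symmetric] s_def[symmetric] using \<open>c \<noteq> 0\<close> by simp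
  qed
  then have "?D = 2 * mean_t \<sigma> a m t / prec_t \<sigma> a t"
    unfolding mean_t_def c_def[symmetric] s_def[symmetric]
    using D E assms(1) by (simp add: field_simps)
  ultimately show ?thesis by simp
qed

lemma cos_tan_bounds_below_arctan:
  assumes "0 \<le> \<phi>" and "\<phi> < arctan b"
  shows "cos \<phi> > 0" and "tan \<phi> \<ge> 0" and "tan \<phi> < b"
proof -
  have "\<phi> < pi / 2" using assms(2) arctan_ubound[of b] by linarith
  then show "cos \<phi> > 0" and "tan \<phi> \<ge> 0"
    using assms(1) by (auto intro: cos_gt_zero_pi tan_pos_pi2_le)
  show "tan \<phi> < b"
    using tan_monotone'[of \<phi> "arctan b"] assms \<open>\<phi> < pi / 2\<close> arctan_ubound[of b]
    by (simp add: tan_arctan)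
qed

lemma prec_t_pos:
  assumes "\<sigma> > 0" and "a > 0" and "0 \<le> t" and "2 * \<sigma> * t < arctan (a * \<sigma>)"
  shows "prec_t \<sigma> a t > 0"
  using cos_tan_bounds_below_arctan[of "2 * \<sigma> * t" "a * \<sigma>"] assms
  unfolding prec_t_def by (intro divide_pos_pos) (auto intro!: add_pos_nonneg mult_pos_pos)

lemma has_real_derivative_gauss_solution:
  fixes \<sigma> a m t x :: real
  assumes "\<sigma> > 0" and "a > 0" and "0 \<le> t" and "2 * \<sigma> * t < arctan (a * \<sigma>)"
  defines "A \<equiv> prec_t \<sigma> a t" and "M \<equiv> mean_t \<sigma> a m t"
  shows "((\<lambda>s. gauss (prec_t \<sigma> a s) (mean_t \<sigma> a m s) x) has_real_derivative
     \<sigma>^2 * ((A^2 * (x - M)^2 - A) * gauss A M x) + (x^2 - (1 / A + M^2)) * gauss A M x) (at t)"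
proof -
  define \<phi> where "\<phi> = 2 * \<sigma> * t"
  have "0 \<le> \<phi>" "\<phi> < arctan (a * \<sigma>)" using assms by (simp_all add: \<phi>_def)
  note bounds = cos_tan_bounds_below_arctan[OF this]
  have cos: "cos \<phi> \<noteq> 0" using bounds(1) by simp
  have "a * \<sigma> * tan \<phi> \<ge> 0" using bounds(2) assms(1,2) by simp
  then have den: "1 + a * \<sigma> * tan \<phi> \<noteq> 0" by linarith
  have "a * \<sigma> * cos \<phi> - sin \<phi> = cos \<phi> * (a * \<sigma> - tan \<phi>)"
    using cos by (simp add: tan_def field_simps)
  then have "a * \<sigma> * cos \<phi> - sin \<phi> \<noteq> 0" using bounds by simp
  with cos den assms(1-4) show ?thesis
    unfolding \<phi>_def A_def M_def
    by (intro has_real_derivative_gauss_riccati has_real_derivative_prec_t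
        has_real_derivative_mean_t prec_t_pos) simp_all
qed

lemma gauss_solution_solves_pde:
  fixes \<sigma> a m t :: real
  assumes "\<sigma> > 0" and "a > 0" and "0 \<le> t" and "2 * \<sigma> * t < arctan (a * \<sigma>)"
  defines "u \<equiv> \<lambda>s. gauss (prec_t \<sigma> a s) (mean_t \<sigma> a m s)"
  shows "prec_t \<sigma> a t > 0
        \<and> (\<lambda>y. y^2 * u t y) integrable_on UNIV
        \<and> (\<forall>x. \<exists>ux uxx.
              (\<forall>y. (u t has_real_derivative ux y) (at y))
            \<and> (ux has_real_derivative uxx) (at x)
            \<and> ((\<lambda>s. u s x) has_real_derivative
                  (\<sigma>^2 * uxx + (x^2 - integral UNIV (\<lambda>y. y^2 * u t y)) * u t x)) (at t))"
proof -
  define A M where "A = prec_t \<sigma> a t" and "M = mean_t \<sigma> a m t"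
  have "A > 0" using prec_t_pos[OF assms(1-4)] by (simp add: A_def)
  have moment: "((\<lambda>y. y^2 * u t y) has_integral (1 / A + M^2)) UNIV"
    using has_integral_power2_gauss[OF \<open>A > 0\<close>] by (simp add: u_def A_def M_def)
  define ux where "ux y = - A * (y - M) * gauss A M y" for y
  define uxx where "uxx x = (A^2 * (x - M)^2 - A) * gauss A M x" for x
  have "(u t has_real_derivative ux y) (at y)" for y
    unfolding u_def ux_def A_def M_def by (rule has_real_derivative_gauss)
  moreover have "(ux has_real_derivative uxx x) (at x)" for x
    unfolding ux_def[abs_def] uxx_def by (rule has_real_derivative_gauss_deriv)
  moreover have "((\<lambda>s. u s x) has_real_derivative
      \<sigma>^2 * uxx x + (x^2 - integral UNIV (\<lambda>y. y^2 * u t y)) * u t x) (at t)" for x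
    using has_real_derivative_gauss_solution[OF assms(1-4)] integral_unique[OF moment]
    by (simp add: u_def uxx_def A_def M_def)
  ultimately show ?thesis
    using \<open>A > 0\<close> moment unfolding A_def by blast
qed

theorem proposition3p2:
  fixes \<sigma> a m :: real and u :: "real \<Rightarrow> real \<Rightarrow> real"
  assumes "\<sigma> > 0" and "a > 0"
    and u_def: "\<And>t x. u t x = gauss (prec_t \<sigma> a t) (mean_t \<sigma> a m t) x"
  defines "T \<equiv> arctan (a * \<sigma>) / (2 * \<sigma>)"
  shows "(\<forall>x. u 0 x = gauss a m x)
    \<and> (\<forall>x. ((\<lambda>s. u s x) \<longlongrightarrow> gauss a m x) (at_right 0))
    \<and> (\<forall>t\<in>{0<..<T}. prec_t \<sigma> a t > 0
        \<and> (\<lambda>y. y^2 * u t y) integrable_on UNIV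
        \<and> (\<forall>x. \<exists>ux uxx.
              (\<forall>y. ((\<lambda>z. u t z) has_real_derivative ux y) (at y))
            \<and> (ux has_real_derivative uxx) (at x)
            \<and> ((\<lambda>s. u s x) has_real_derivative
                  (\<sigma>^2 * uxx + (x^2 - integral UNIV (\<lambda>y. y^2 * u t y)) * u t x)) (at t)))"
proof -
  have u: "u t = gauss (prec_t \<sigma> a t) (mean_t \<sigma> a m t)" for t
    by (simp add: fun_eq_iff u_def)
  have "prec_t \<sigma> a 0 = a" and "mean_t \<sigma> a m 0 = m"
    using assms(1,2) by (simp_all add: prec_t_def mean_t_def)
  then have initial: "u 0 = gauss a m" by (simp add: u)
  have "isCont (\<lambda>s. u s x) 0" for x
    unfolding u using assms(1,2)
    by (intro DERIV_isCont[OF has_real_derivative_gauss_solution]) simp_all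
  then have continuity: "((\<lambda>s. u s x) \<longlongrightarrow> gauss a m x) (at_right 0)" for x
    using initial by (metis isCont_def tendsto_mono at_le subset_UNIV)
  have "2 * \<sigma> * t < arctan (a * \<sigma>)" if "t < T" for t
    using that \<open>\<sigma> > 0\<close> by (simp add: T_def field_simps)
  with initial continuity show ?thesis
    using gauss_solution_solves_pde[OF assms(1,2)] by (simp add: u)
qed

end
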